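(* The 3-graph $J_4$ with vertex set $[5]$ and edges $123,124,125,134,135,145$ is forbidden for every triangle $T$.
   Context: A 3-graph is a 3-uniform hypergraph; $G$ is $F$-free if it has no (not necessarily induced) subhypergraph isomorphic to $F$. For a triangle $T$ with side lengths $a,b,c$ and $\varepsilon>0$, with $\varepsilon'=\varepsilon\min\{a,b,c\}$, a triangle $A'B'C'$ is $\varepsilon$-congruent to $T$ if there are $A,B,C\in\mathbb{R}^2$ with $ABC$ congruent to $T$ and $A',B',C'$ within distance $\varepsilon'$ of $A,B,C$ respectively. For finite $P\subseteq\mathbb{R}^2$, $\mathcal{H}(T,P,\varepsilon)$ is the 3-graph on $P$ whose edges are triples forming triangles $\varepsilon$-congruent to $T$. A 3-graph $H$ is forbidden for $T$ if there exists $\varepsilon>0$ such that for every $P\subseteq\mathbb{R}^2$ with $|P|=|V(H)|$, $\mathcal{H}(T,P,\varepsilon)$ is $H$-free. *)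

theory Defs
  imports "HOL-Analysis.Analysis"
begin

type_synonym 'a graph3 = "'a set \<times> 'a set set"

definition is_3graph :: "'a graph3 \<Rightarrow> bool" where
  "is_3graph G \<longleftrightarrow> (\<forall>e\<in>snd G. e \<subseteq> fst G \<and> card e = 3)"

definition contains_copy :: "'b graph3 \<Rightarrow> 'a graph3 \<Rightarrow> bool" where
  "contains_copy F G \<longleftrightarrow>
     (\<exists>f. inj_on f (fst F) \<and> f ` fst F \<subseteq> fst G \<and> (\<forall>e\<in>snd F. f ` e \<in> snd G))"

definition free_of :: "'b graph3 \<Rightarrow> 'a graph3 \<Rightarrow> bool" where
  "free_of F G \<longleftrightarrow> \<not> contains_copy F G"

definition is_triangle :: "real \<Rightarrow> real \<Rightarrow> real \<Rightarrow> bool" where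
  "is_triangle a b c \<longleftrightarrow> a > 0 \<and> b > 0 \<and> c > 0 \<and> a < b + c \<and> b < a + c \<and> c < a + b"

definition eps_congruent ::
  "real \<Rightarrow> real \<Rightarrow> real \<Rightarrow> real \<Rightarrow> real^2 \<Rightarrow> real^2 \<Rightarrow> real^2 \<Rightarrow> bool" where
  "eps_congruent a b c \<epsilon> A' B' C' \<longleftrightarrow>
     (\<exists>A B C :: real^2. dist B C = a \<and> dist C A = b \<and> dist A B = c \<and>
        dist A' A \<le> \<epsilon> * min a (min b c) \<and>
        dist B' B \<le> \<epsilon> * min a (min b c) \<and>
        dist C' C \<le> \<epsilon> * min a (min b c))"

definition congr_graph :: "real \<Rightarrow> real \<Rightarrow> real \<Rightarrow> (real^2) set \<Rightarrow> real \<Rightarrow> (real^2) graph3" where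
  "congr_graph a b c P \<epsilon> =
     (P, {e. e \<subseteq> P \<and> card e = 3 \<and>
            (\<exists>x y z. e = {x, y, z} \<and> eps_congruent a b c \<epsilon> x y z)})"

definition forbidden_for :: "'b graph3 \<Rightarrow> real \<Rightarrow> real \<Rightarrow> real \<Rightarrow> bool" where
  "forbidden_for H a b c \<longleftrightarrow>
     (\<exists>\<epsilon>>0. \<forall>P :: (real^2) set. finite P \<and> card P = card (fst H) \<longrightarrow>
         free_of H (congr_graph a b c P \<epsilon>))"

definition J4 :: "nat graph3" where
  "J4 = ({1..5}, {{1,2,3},{1,2,4},{1,2,5},{1,3,4},{1,3,5},{1,4,5}})"

end

theory Submission
  imports Defs
begin

text \<open>
  Suppose five points x, y1, ..., y4 of the plane span ten triangles x yi yj that are all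
  \<open>\<epsilon>\<close>-congruent to T. Then every distance among them lies within \<open>2\<epsilon> min(a, b, c)\<close>
  of a side length, and snapping each distance to that side length yields labels t for which every
  triple (t x yi, t x yj, t yi yj) is a permutation of (a, b, c). Four points of the plane have
  vanishing Gram determinant, written in terms of their six distances; as this determinant is
  continuous and only finitely many label patterns occur, for small \<open>\<epsilon>\<close> the snapped labels
  of any four of the five points still have vanishing Gram determinant. That is impossible: for a
  scalene T the four labels t x yi would be distinct elements of {a, b, c}, and for an isosceles T
  the labels force either a regular tetrahedron or two incompatible relations
  \<open>q\<^sup>2 = 3 p\<^sup>2\<close> and \<open>q\<^sup>2 = 2 p\<^sup>2\<close> between the two side lengths.
\<close>

text \<open>The Gram determinant of \<open>p1 - p0, p2 - p0, p3 - p0\<close>, whose entries are expressed through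
  the distances \<open>dij = dist pi pj\<close> by polarization.\<close>
definition gram_det_of_dists :: "real \<Rightarrow> real \<Rightarrow> real \<Rightarrow> real \<Rightarrow> real \<Rightarrow> real \<Rightarrow> real" where
  "gram_det_of_dists d01 d02 d03 d12 d13 d23 =
    (let g11 = d01\<^sup>2; g22 = d02\<^sup>2; g33 = d03\<^sup>2;
         g12 = (d01\<^sup>2 + d02\<^sup>2 - d12\<^sup>2) / 2; g13 = (d01\<^sup>2 + d03\<^sup>2 - d13\<^sup>2) / 2;
         g23 = (d02\<^sup>2 + d03\<^sup>2 - d23\<^sup>2) / 2
     in g11 * g22 * g33 + 2 * g12 * g13 * g23 - g11 * g23\<^sup>2 - g22 * g13\<^sup>2 - g33 * g12\<^sup>2)"

lemma power2_dist_vec2: "(dist p q)\<^sup>2 = (p$1 - q$1)\<^sup>2 + (p$2 - q$2)\<^sup>2" for p q :: "real^2"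
  by (simp add: dist_vec_def L2_set_def sum_2 dist_real_def)

lemma gram_det_of_dists_planar:
  fixes p0 p1 p2 p3 :: "real^2"
  shows "gram_det_of_dists (dist p0 p1) (dist p0 p2) (dist p0 p3) (dist p1 p2) (dist p1 p3) (dist p2 p3) = 0"
proof -
  define u1 u2 v1 v2 w1 w2 where "u1 = p1$1 - p0$1" "u2 = p1$2 - p0$2"
    "v1 = p2$1 - p0$1" "v2 = p2$2 - p0$2" "w1 = p3$1 - p0$1" "w2 = p3$2 - p0$2"
  have sq: "(dist p0 p1)\<^sup>2 = u1\<^sup>2 + u2\<^sup>2" "(dist p0 p2)\<^sup>2 = v1\<^sup>2 + v2\<^sup>2"
    "(dist p0 p3)\<^sup>2 = w1\<^sup>2 + w2\<^sup>2" "(dist p1 p2)\<^sup>2 = (u1 - v1)\<^sup>2 + (u2 - v2)\<^sup>2"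
    "(dist p1 p3)\<^sup>2 = (u1 - w1)\<^sup>2 + (u2 - w2)\<^sup>2" "(dist p2 p3)\<^sup>2 = (v1 - w1)\<^sup>2 + (v2 - w2)\<^sup>2"
    unfolding power2_dist_vec2 u1_u2_v1_v2_w1_w2_def by algebra+
  have polarization: "((dist p0 p1)\<^sup>2 + (dist p0 p2)\<^sup>2 - (dist p1 p2)\<^sup>2) / 2 = u1 * v1 + u2 * v2"
    "((dist p0 p1)\<^sup>2 + (dist p0 p3)\<^sup>2 - (dist p1 p3)\<^sup>2) / 2 = u1 * w1 + u2 * w2"
    "((dist p0 p2)\<^sup>2 + (dist p0 p3)\<^sup>2 - (dist p2 p3)\<^sup>2) / 2 = v1 * w1 + v2 * w2"
    unfolding sq by (simp_all add: power2_eq_square algebra_simps)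
  show ?thesis
    unfolding gram_det_of_dists_def Let_def polarization unfolding sq(1-3) by algebra
qed

lemma gram_det_of_dists_regular: "s > 0 \<Longrightarrow> gram_det_of_dists s s s s s s \<noteq> 0"
  by (simp add: gram_det_of_dists_def Let_def power2_eq_square)

text \<open>Planar points with distances p p p q q q form an equilateral triangle of side q with its
  centre, so \<open>q\<^sup>2 = 3 p\<^sup>2\<close>; distances p p q q p p describe a rhombus of side p with both
  diagonals q, i.e. a square, so \<open>q\<^sup>2 = 2 p\<^sup>2\<close>.\<close>
lemma gram_det_of_dists_isosceles:
  assumes "p > 0" "q > 0" "gram_det_of_dists p p p q q q = 0"
  shows "gram_det_of_dists p p q q p p \<noteq> 0"
proof -
  have "gram_det_of_dists p p p q q q = (q\<^sup>2 / 2)\<^sup>2 * (3 * p\<^sup>2 - q\<^sup>2)"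
    by (simp add: gram_det_of_dists_def Let_def power2_eq_square field_simps)
  then have "q\<^sup>2 = 3 * p\<^sup>2"
    using assms by simp
  moreover have "gram_det_of_dists p p q q p p = (q\<^sup>2)\<^sup>2 * (p\<^sup>2 - q\<^sup>2 / 2)"
    by (simp add: gram_det_of_dists_def Let_def power2_eq_square field_simps)
  ultimately show ?thesis
    using assms by simp
qed

lemma dist_Pair_le: "dist (a, b) (c, d) \<le> dist a c + dist b d"
  by (simp add: dist_Pair_Pair sqrt_sum_squares_le_sum_abs[of "dist a c" "dist b d", simplified])

lemma gram_det_of_dists_nonzero_nearby:
  assumes "gram_det_of_dists t1 t2 t3 t4 t5 t6 \<noteq> 0"
  shows "\<forall>\<^sub>F \<eta> in at_right 0. \<forall>d1 d2 d3 d4 d5 d6. \<bar>d1 - t1\<bar> \<le> \<eta> \<longrightarrow> \<bar>d2 - t2\<bar> \<le> \<eta> \<longrightarrow>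
     \<bar>d3 - t3\<bar> \<le> \<eta> \<longrightarrow> \<bar>d4 - t4\<bar> \<le> \<eta> \<longrightarrow> \<bar>d5 - t5\<bar> \<le> \<eta> \<longrightarrow> \<bar>d6 - t6\<bar> \<le> \<eta> \<longrightarrow>
     gram_det_of_dists d1 d2 d3 d4 d5 d6 \<noteq> 0"
proof -
  define F where "F = (\<lambda>(d1, d2, d3, d4, d5, d6). gram_det_of_dists d1 d2 d3 d4 d5 d6)"
  define t where "t = (t1, t2, t3, t4, t5, t6)"
  have "isCont F t"
    unfolding F_def gram_det_of_dists_def Let_def case_prod_unfold
    by (intro continuous_intros) auto
  then obtain \<delta> where "\<delta> > 0" and \<delta>: "\<And>z. dist t z < \<delta> \<Longrightarrow> F z \<noteq> 0"
    using continuous_at_avoid[of t F 0] assms by (auto simp: F_def t_def)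
  have "\<forall>\<^sub>F \<eta> in at_right 0. \<eta> < \<delta> / 6"
    using \<open>\<delta> > 0\<close> by (auto simp: eventually_at_right_field intro: exI[of _ "\<delta> / 6"])
  then show ?thesis
  proof (rule eventually_mono, intro allI impI)
    fix \<eta> d1 d2 d3 d4 d5 d6 :: real
    assume "\<eta> < \<delta> / 6" "\<bar>d1 - t1\<bar> \<le> \<eta>" "\<bar>d2 - t2\<bar> \<le> \<eta>" "\<bar>d3 - t3\<bar> \<le> \<eta>"
      "\<bar>d4 - t4\<bar> \<le> \<eta>" "\<bar>d5 - t5\<bar> \<le> \<eta>" "\<bar>d6 - t6\<bar> \<le> \<eta>"
    moreover have "dist t (d1, d2, d3, d4, d5, d6) \<le>
        dist t1 d1 + (dist t2 d2 + (dist t3 d3 + (dist t4 d4 + (dist t5 d5 + dist t6 d6))))"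
      unfolding t_def by (meson add_left_mono dist_Pair_le order_trans)
    ultimately have "dist t (d1, d2, d3, d4, d5, d6) < \<delta>"
      by (simp add: dist_real_def abs_minus_commute)
    then show "gram_det_of_dists d1 d2 d3 d4 d5 d6 \<noteq> 0"
      using \<delta> unfolding F_def by fastforce
  qed
qed

definition gram_det_stable :: "real \<Rightarrow> real set \<Rightarrow> bool" where
  "gram_det_stable \<eta> S \<longleftrightarrow> (\<forall>t1\<in>S. \<forall>t2\<in>S. \<forall>t3\<in>S. \<forall>t4\<in>S. \<forall>t5\<in>S. \<forall>t6\<in>S.
     gram_det_of_dists t1 t2 t3 t4 t5 t6 \<noteq> 0 \<longrightarrow> (\<forall>d1 d2 d3 d4 d5 d6.
       \<bar>d1 - t1\<bar> \<le> \<eta> \<longrightarrow> \<bar>d2 - t2\<bar> \<le> \<eta> \<longrightarrow> \<bar>d3 - t3\<bar> \<le> \<eta> \<longrightarrow>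
       \<bar>d4 - t4\<bar> \<le> \<eta> \<longrightarrow> \<bar>d5 - t5\<bar> \<le> \<eta> \<longrightarrow> \<bar>d6 - t6\<bar> \<le> \<eta> \<longrightarrow>
       gram_det_of_dists d1 d2 d3 d4 d5 d6 \<noteq> 0))"

lemma eventually_gram_det_stable: "finite S \<Longrightarrow> \<forall>\<^sub>F \<eta> in at_right 0. gram_det_stable \<eta> S"
  unfolding gram_det_stable_def
proof (intro eventually_ball_finite ballI)
  fix t1 t2 t3 t4 t5 t6 :: real
  show "\<forall>\<^sub>F \<eta> in at_right 0. gram_det_of_dists t1 t2 t3 t4 t5 t6 \<noteq> 0 \<longrightarrow> (\<forall>d1 d2 d3 d4 d5 d6.
      \<bar>d1 - t1\<bar> \<le> \<eta> \<longrightarrow> \<bar>d2 - t2\<bar> \<le> \<eta> \<longrightarrow> \<bar>d3 - t3\<bar> \<le> \<eta> \<longrightarrow>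
      \<bar>d4 - t4\<bar> \<le> \<eta> \<longrightarrow> \<bar>d5 - t5\<bar> \<le> \<eta> \<longrightarrow> \<bar>d6 - t6\<bar> \<le> \<eta> \<longrightarrow>
      gram_det_of_dists d1 d2 d3 d4 d5 d6 \<noteq> 0)"
  proof (cases "gram_det_of_dists t1 t2 t3 t4 t5 t6 = 0")
    case False
    then show ?thesis
      using gram_det_of_dists_nonzero_nearby[OF False] by simp
  qed simp
qed

definition perm3 :: "real \<Rightarrow> real \<Rightarrow> real \<Rightarrow> real \<Rightarrow> real \<Rightarrow> real \<Rightarrow> bool" where
  "perm3 u v w a b c \<longleftrightarrow> (u = a \<and> v = b \<and> w = c) \<or> (u = a \<and> v = c \<and> w = b) \<or>
     (u = b \<and> v = a \<and> w = c) \<or> (u = b \<and> v = c \<and> w = a) \<or>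
     (u = c \<and> v = a \<and> w = b) \<or> (u = c \<and> v = b \<and> w = a)"

lemma obtain_other_element:
  assumes "card Y \<ge> 2"
  obtains v where "v \<in> Y" "v \<noteq> u"
proof -
  have "card (Y - {u}) > 0"
    using assms by (simp add: card_Diff_singleton_if)
  then obtain v where "v \<in> Y - {u}"
    by (metis card_gt_0_iff ex_in_conv)
  then show thesis
    using that by blast
qed

lemma no_planar_isosceles_star:
  fixes t :: "'p \<Rightarrow> 'p \<Rightarrow> real"
  assumes "p > 0" "q > 0" "card Y = 4" "x \<notin> Y"
    and sides: "\<And>u v. u \<in> Y \<Longrightarrow> v \<in> Y \<Longrightarrow> u \<noteq> v \<Longrightarrow> perm3 (t x u) (t x v) (t u v) p p q"
    and planar: "\<And>w0 w1 w2 w3. {w0, w1, w2, w3} \<subseteq> insert x Y \<Longrightarrow> distinct [w0, w1, w2, w3] \<Longrightarrow>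
       gram_det_of_dists (t w0 w1) (t w0 w2) (t w0 w3) (t w1 w2) (t w1 w3) (t w2 w3) = 0"
  shows False
proof -
  have side: "t x u = p \<and> t x v = p \<and> t u v = q \<or> t x u = p \<and> t x v = q \<and> t u v = p \<or>
      t x u = q \<and> t x v = p \<and> t u v = p" if "u \<in> Y" "v \<in> Y" "u \<noteq> v" for u v
    using sides[OF that] unfolding perm3_def by blast
  obtain y1 y2 y3 y4 where Y: "Y = {y1, y2, y3, y4}" and dy: "distinct [y1, y2, y3, y4]"
    using \<open>card Y = 4\<close> by (auto simp: card_Suc_eq numeral_eq_Suc)
  consider "p = q" | "p \<noteq> q" "\<forall>y\<in>Y. t x y = p" | z where "p \<noteq> q" "z \<in> Y" "t x z \<noteq> p"
    by blast
  then show False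
  proof cases
    case 1
    then have "t x y1 = p" "t x y2 = p" "t x y3 = p" "t y1 y2 = p" "t y1 y3 = p" "t y2 y3 = p"
      using side[of y1 y2] side[of y1 y3] side[of y2 y3] dy Y by auto
    moreover have "gram_det_of_dists (t x y1) (t x y2) (t x y3) (t y1 y2) (t y1 y3) (t y2 y3) = 0"
      using planar[of x y1 y2 y3] Y dy \<open>x \<notin> Y\<close> by auto
    ultimately show False
      using gram_det_of_dists_regular[OF \<open>p > 0\<close>] by simp
  next
    case 2
    then have "t y1 y2 = q" "t y1 y3 = q" "t y1 y4 = q" "t y2 y3 = q" "t y2 y4 = q" "t y3 y4 = q"
      using side[of y1 y2] side[of y1 y3] side[of y2 y3] side[of y1 y4] side[of y2 y4]
        side[of y3 y4] dy Y by auto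
    moreover have "gram_det_of_dists (t y1 y2) (t y1 y3) (t y1 y4) (t y2 y3) (t y2 y4) (t y3 y4) = 0"
      using planar[of y1 y2 y3 y4] Y dy by auto
    ultimately show False
      using gram_det_of_dists_regular[OF \<open>q > 0\<close>] by simp
  next
    case 3
    have "card (Y - {z}) = 3"
      using \<open>card Y = 4\<close> \<open>z \<in> Y\<close> by (simp add: card_Diff_singleton_if)
    then obtain z1 z2 z3 where Z: "Y - {z} = {z1, z2, z3}" and dz: "distinct [z1, z2, z3]"
      by (auto simp: card_Suc_eq numeral_eq_Suc)
    have zs: "z1 \<in> Y" "z2 \<in> Y" "z3 \<in> Y" "z1 \<noteq> z" "z2 \<noteq> z" "z3 \<noteq> z"
      using Z by auto
    have xz: "t x z = q"
      using side[of z z1] zs 3 by auto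
    have "t x z1 = p" "t x z2 = p" "t x z3 = p" "t z1 z = p" "t z2 z = p"
      using side[of z1 z] side[of z2 z] side[of z3 z] zs xz 3 by auto
    moreover have "t z1 z2 = q" "t z1 z3 = q" "t z2 z3 = q"
      using side[of z1 z2] side[of z1 z3] side[of z2 z3] zs dz calculation 3 by auto
    moreover have "gram_det_of_dists (t x z1) (t x z2) (t x z3) (t z1 z2) (t z1 z3) (t z2 z3) = 0"
      using planar[of x z1 z2 z3] zs dz \<open>x \<notin> Y\<close> by auto
    moreover have "gram_det_of_dists (t x z1) (t x z2) (t x z) (t z1 z2) (t z1 z) (t z2 z) = 0"
      using planar[of x z1 z2 z] zs dz 3 \<open>x \<notin> Y\<close> by auto
    ultimately show False
      using gram_det_of_dists_isosceles[OF \<open>p > 0\<close> \<open>q > 0\<close>] xz by simp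
  qed
qed

lemma no_planar_star:
  fixes t :: "'p \<Rightarrow> 'p \<Rightarrow> real"
  assumes "a > 0" "b > 0" "c > 0" "card Y = 4" "x \<notin> Y"
    and sides: "\<And>u v. u \<in> Y \<Longrightarrow> v \<in> Y \<Longrightarrow> u \<noteq> v \<Longrightarrow> perm3 (t x u) (t x v) (t u v) a b c"
    and planar: "\<And>w0 w1 w2 w3. {w0, w1, w2, w3} \<subseteq> insert x Y \<Longrightarrow> distinct [w0, w1, w2, w3] \<Longrightarrow>
       gram_det_of_dists (t w0 w1) (t w0 w2) (t w0 w3) (t w1 w2) (t w1 w3) (t w2 w3) = 0"
  shows False
proof (cases "a = b \<or> a = c \<or> b = c")
  case True
  then consider "a = b" | "a = c" | "b = c"
    by blast
  then show False
  proof cases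
    case 1
    then show False
      using no_planar_isosceles_star[of a c Y x t] assms by simp
  next
    case 2
    then have "perm3 (t x u) (t x v) (t u v) a a b" if "u \<in> Y" "v \<in> Y" "u \<noteq> v" for u v
      using sides[OF that] unfolding perm3_def by blast
    then show False
      using no_planar_isosceles_star[of a b Y x t] assms by blast
  next
    case 3
    then have "perm3 (t x u) (t x v) (t u v) b b a" if "u \<in> Y" "v \<in> Y" "u \<noteq> v" for u v
      using sides[OF that] unfolding perm3_def by blast
    then show False
      using no_planar_isosceles_star[of b a Y x t] assms by blast
  qed
next
  case False
  have "inj_on (t x) Y"
  proof (rule inj_onI, rule ccontr)
    fix u v assume "u \<in> Y" "v \<in> Y" "t x u = t x v" "u \<noteq> v"
    then show False
      using sides[of u v] False unfolding perm3_def by auto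
  qed
  moreover have "t x ` Y \<subseteq> {a, b, c}"
  proof
    fix s assume "s \<in> t x ` Y"
    then obtain u where u: "u \<in> Y" "s = t x u"
      by blast
    moreover obtain v where "v \<in> Y" "v \<noteq> u"
      using obtain_other_element[of Y u] \<open>card Y = 4\<close> by auto
    ultimately show "s \<in> {a, b, c}"
      using sides[of u v] unfolding perm3_def by auto
  qed
  ultimately have "card Y \<le> card {a, b, c}"
    by (intro card_inj_on_le) auto
  also have "\<dots> \<le> 3"
    by (simp add: card_insert_if)
  finally show False
    using \<open>card Y = 4\<close> by simp
qed

definition near_perm3 :: "real \<Rightarrow> real \<Rightarrow> real \<Rightarrow> real \<Rightarrow> real \<Rightarrow> real \<Rightarrow> real \<Rightarrow> bool" where
  "near_perm3 a b c \<eta> u v w \<longleftrightarrow> (\<exists>s1 s2 s3. perm3 s1 s2 s3 a b c \<and>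
      \<bar>u - s1\<bar> \<le> \<eta> \<and> \<bar>v - s2\<bar> \<le> \<eta> \<and> \<bar>w - s3\<bar> \<le> \<eta>)"

lemma near_perm3_swap12: "near_perm3 a b c \<eta> u v w \<Longrightarrow> near_perm3 a b c \<eta> v u w"
  unfolding near_perm3_def perm3_def by blast

lemma near_perm3_swap23: "near_perm3 a b c \<eta> u v w \<Longrightarrow> near_perm3 a b c \<eta> u w v"
  unfolding near_perm3_def perm3_def by blast

definition separated :: "real \<Rightarrow> real set \<Rightarrow> bool" where
  "separated \<eta> S \<longleftrightarrow> (\<forall>s\<in>S. \<forall>s'\<in>S. s \<noteq> s' \<longrightarrow> 2 * \<eta> < \<bar>s - s'\<bar>)"

lemma eventually_separated: "finite S \<Longrightarrow> \<forall>\<^sub>F \<eta> in at_right 0. separated \<eta> S"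
  unfolding separated_def
proof (intro eventually_ball_finite ballI)
  fix s s' :: real
  show "\<forall>\<^sub>F \<eta> in at_right 0. s \<noteq> s' \<longrightarrow> 2 * \<eta> < \<bar>s - s'\<bar>"
    by (cases "s = s'") (auto simp: eventually_at_right_field intro!: exI[of _ "\<bar>s - s'\<bar> / 2"])
qed

definition snap :: "real \<Rightarrow> real \<Rightarrow> real \<Rightarrow> real \<Rightarrow> real \<Rightarrow> real" where
  "snap a b c \<eta> d = (if \<bar>d - a\<bar> \<le> \<eta> then a else if \<bar>d - b\<bar> \<le> \<eta> then b else c)"

lemma snap_in: "snap a b c \<eta> d \<in> {a, b, c}"
  unfolding snap_def by auto

lemma snap_eq:
  assumes sep: "separated \<eta> {a, b, c}"
    and "s \<in> {a, b, c}" "\<bar>d - s\<bar> \<le> \<eta>"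
  shows "snap a b c \<eta> d = s"
proof -
  have uniq: "s' = s" if "s' \<in> {a, b, c}" "\<bar>d - s'\<bar> \<le> \<eta>" for s'
  proof (rule ccontr)
    assume "s' \<noteq> s"
    then have "2 * \<eta> < \<bar>s' - s\<bar>"
      using sep that(1) assms(2) unfolding separated_def by blast
    then show False
      using that(2) assms(3) by linarith
  qed
  show ?thesis
    unfolding snap_def using uniq[of a] uniq[of b] assms(2,3) by auto
qed

lemma near_perm3_snap:
  assumes sep: "separated \<eta> {a, b, c}"
    and "near_perm3 a b c \<eta> u v w"
  shows "perm3 (snap a b c \<eta> u) (snap a b c \<eta> v) (snap a b c \<eta> w) a b c"
    and "\<bar>u - snap a b c \<eta> u\<bar> \<le> \<eta>" "\<bar>v - snap a b c \<eta> v\<bar> \<le> \<eta>" "\<bar>w - snap a b c \<eta> w\<bar> \<le> \<eta>"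
proof -
  obtain s1 s2 s3 where s: "perm3 s1 s2 s3 a b c" "\<bar>u - s1\<bar> \<le> \<eta>" "\<bar>v - s2\<bar> \<le> \<eta>" "\<bar>w - s3\<bar> \<le> \<eta>"
    using assms(2) unfolding near_perm3_def by blast
  moreover have "s1 \<in> {a, b, c}" "s2 \<in> {a, b, c}" "s3 \<in> {a, b, c}"
    using s(1) unfolding perm3_def by auto
  ultimately have "snap a b c \<eta> u = s1" "snap a b c \<eta> v = s2" "snap a b c \<eta> w = s3"
    using snap_eq[OF sep] by auto
  then show "perm3 (snap a b c \<eta> u) (snap a b c \<eta> v) (snap a b c \<eta> w) a b c"
    and "\<bar>u - snap a b c \<eta> u\<bar> \<le> \<eta>" "\<bar>v - snap a b c \<eta> v\<bar> \<le> \<eta>" "\<bar>w - snap a b c \<eta> w\<bar> \<le> \<eta>"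
    using s by simp_all
qed

lemma perm_invariant3:
  assumes swap12: "\<And>u v w. P u v w \<Longrightarrow> P v u w" and swap23: "\<And>u v w. P u v w \<Longrightarrow> P u w v"
    and "P p q r" "{u, v, w} = {p, q, r}" "distinct [u, v, w]"
  shows "P u v w"
proof -
  have "P p q r" "P q p r" "P p r q" "P q r p" "P r p q" "P r q p"
    using \<open>P p q r\<close> by (blast intro: swap12 swap23)+
  moreover have "p \<in> {u, v, w}" "q \<in> {u, v, w}" "r \<in> {u, v, w}"
    "u \<in> {p, q, r}" "v \<in> {p, q, r}" "w \<in> {p, q, r}"
    using assms(4) by blast+
  moreover have "(u, v, w) \<in> {(p, q, r), (q, p, r), (p, r, q), (q, r, p), (r, p, q), (r, q, p)}"
    using calculation(7-12) \<open>distinct [u, v, w]\<close> by auto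
  ultimately show ?thesis
    by blast
qed

lemma abs_dist_diff_le: "\<bar>dist p q - dist A B\<bar> \<le> dist p A + dist q B"
  by (smt (verit) dist_commute dist_triangle)

lemma eps_congruent_near_perm3:
  assumes "eps_congruent a b c \<epsilon> p q r"
  shows "near_perm3 a b c (2 * (\<epsilon> * min a (min b c))) (dist p q) (dist p r) (dist q r)"
proof -
  define \<delta> where "\<delta> = \<epsilon> * min a (min b c)"
  obtain A B C :: "real^2" where ABC: "dist B C = a" "dist C A = b" "dist A B = c"
    and "dist p A \<le> \<delta>" "dist q B \<le> \<delta>" "dist r C \<le> \<delta>"
    using assms unfolding eps_congruent_def \<delta>_def by blast
  then have "\<bar>dist p q - c\<bar> \<le> 2 * \<delta>" "\<bar>dist p r - b\<bar> \<le> 2 * \<delta>" "\<bar>dist q r - a\<bar> \<le> 2 * \<delta>"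
    using abs_dist_diff_le[of p q A B] abs_dist_diff_le[of p r A C] abs_dist_diff_le[of q r B C]
    by (simp_all add: dist_commute)
  moreover have "perm3 c b a a b c"
    by (simp add: perm3_def)
  ultimately show ?thesis
    unfolding near_perm3_def \<delta>_def[symmetric] by (intro exI[of _ c] exI[of _ b] exI[of _ a]) simp
qed

lemma congr_graph_edge_near_perm3:
  assumes "{u, v, w} \<in> snd (congr_graph a b c P \<epsilon>)" "distinct [u, v, w]"
  shows "near_perm3 a b c (2 * (\<epsilon> * min a (min b c))) (dist u v) (dist u w) (dist v w)"
proof -
  obtain p q r where pqr: "{u, v, w} = {p, q, r}" "eps_congruent a b c \<epsilon> p q r"
    using assms(1) by (auto simp: congr_graph_def)
  let ?\<eta> = "2 * (\<epsilon> * min a (min b c))"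
  show ?thesis
  proof (rule perm_invariant3[where P = "\<lambda>u v w. near_perm3 a b c ?\<eta> (dist u v) (dist u w) (dist v w)",
        OF _ _ _ pqr(1) assms(2)])
    show "near_perm3 a b c ?\<eta> (dist p q) (dist p r) (dist q r)"
      using pqr(2) by (rule eps_congruent_near_perm3)
  next
    fix u v w :: "real^2"
    assume "near_perm3 a b c ?\<eta> (dist u v) (dist u w) (dist v w)"
    then show "near_perm3 a b c ?\<eta> (dist v u) (dist v w) (dist u w)"
      and "near_perm3 a b c ?\<eta> (dist u w) (dist u v) (dist w v)"
      by (auto dest: near_perm3_swap12 near_perm3_swap23 simp: dist_commute)
  qed
qed

lemma J4_link: "i \<in> {2, 3, 4, 5} \<Longrightarrow> j \<in> {2, 3, 4, 5} \<Longrightarrow> i \<noteq> j \<Longrightarrow> {1, i, j} \<in> snd J4"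
proof -
  have ordered: "{1, i, j} \<in> snd J4" if "i \<in> {2, 3, 4, 5}" "j \<in> {2, 3, 4, 5}" "i < j" for i j :: nat
    using that unfolding J4_def by (elim insertE emptyE) simp_all
  assume "i \<in> {2, 3, 4, 5}" "j \<in> {2, 3, 4, 5}" "i \<noteq> j"
  then show ?thesis
    using ordered[of i j] ordered[of j i] by (cases "i < j") (simp_all add: insert_commute)
qed

lemma contains_copy_J4D:
  assumes "contains_copy J4 G"
  obtains x Y where "card Y = 4" "x \<notin> Y"
    "\<And>u v. u \<in> Y \<Longrightarrow> v \<in> Y \<Longrightarrow> u \<noteq> v \<Longrightarrow> {x, u, v} \<in> snd G \<and> distinct [x, u, v]"
proof -
  have vertices: "fst J4 = {1, 2, 3, 4, 5}"
    by (auto simp: J4_def)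
  obtain f where inj: "inj_on f {1, 2, 3, 4, 5}" and edges: "\<forall>e\<in>snd J4. f ` e \<in> snd G"
    using assms unfolding contains_copy_def vertices by blast
  have "inj_on f {2, 3, 4, 5}"
    using inj by (rule inj_on_subset) auto
  then have card: "card (f ` {2, 3, 4, 5}) = 4"
    by (simp add: card_image)
  have centre: "f 1 \<notin> f ` {2, 3, 4, 5}"
    using inj_on_image_mem_iff[OF inj, of 1 "{2, 3, 4, 5}"] by simp
  have link: "{f 1, f i, f j} \<in> snd G" if "i \<in> {2, 3, 4, 5}" "j \<in> {2, 3, 4, 5}" "i \<noteq> j" for i j
    using bspec[OF edges J4_link[OF that]] by simp
  show thesis
  proof (rule that[OF card centre])
    fix u v assume uv: "u \<in> f ` {2, 3, 4, 5}" "v \<in> f ` {2, 3, 4, 5}" "u \<noteq> v"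
    obtain i where i: "i \<in> {2, 3, 4, 5}" "u = f i"
      using uv(1) by (rule imageE)
    obtain j where j: "j \<in> {2, 3, 4, 5}" "v = f j"
      using uv(2) by (rule imageE)
    have "i \<noteq> j"
      using i(2) j(2) \<open>u \<noteq> v\<close> by blast
    then have "{f 1, u, v} \<in> snd G"
      using link[OF i(1) j(1)] i(2) j(2) by simp
    moreover have "f 1 \<noteq> u" "f 1 \<noteq> v"
      using centre uv(1,2) by metis+
    then have "distinct [f 1, u, v]"
      using \<open>u \<noteq> v\<close> by simp
    ultimately show "{f 1, u, v} \<in> snd G \<and> distinct [f 1, u, v]"
      by blast
  qed
qed

lemma no_near_planar_star_at:
  fixes x :: "real^2"
  assumes "a > 0" "b > 0" "c > 0" and sep: "separated \<eta> {a, b, c}"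
    and "gram_det_stable \<eta> {a, b, c}" and "card Y = 4" "x \<notin> Y"
    and near: "\<And>u v. u \<in> Y \<Longrightarrow> v \<in> Y \<Longrightarrow> u \<noteq> v \<Longrightarrow> near_perm3 a b c \<eta> (dist x u) (dist x v) (dist u v)"
  shows False
proof -
  note stable = \<open>gram_det_stable \<eta> {a, b, c}\<close>[unfolded gram_det_stable_def, rule_format]
  define t :: "real^2 \<Rightarrow> real^2 \<Rightarrow> real" where "t u v = snap a b c \<eta> (dist u v)" for u v
  have t_in: "t u v \<in> {a, b, c}" for u v
    unfolding t_def by (rule snap_in)
  have near_Y: "\<bar>dist x u - t x u\<bar> \<le> \<eta>" "\<bar>dist u v - t u v\<bar> \<le> \<eta>"
    if "u \<in> Y" "v \<in> Y" "u \<noteq> v" for u v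
    using near_perm3_snap(2,4)[OF sep near[OF that]] by (simp_all add: t_def)
  have near_x: "\<bar>dist x u - t x u\<bar> \<le> \<eta>" if "u \<in> Y" for u
    using obtain_other_element[of Y u] \<open>card Y = 4\<close> near_Y(1)[OF that] by force
  have t_near: "\<bar>dist u v - t u v\<bar> \<le> \<eta>" if "u \<in> insert x Y" "v \<in> insert x Y" "u \<noteq> v" for u v
    using that near_x[of u] near_x[of v] near_Y(2)[of u v] by (auto simp: t_def dist_commute)
  show False
  proof (rule no_planar_star[of a b c Y x t])
    show "perm3 (t x u) (t x v) (t u v) a b c" if "u \<in> Y" "v \<in> Y" "u \<noteq> v" for u v
      using near_perm3_snap(1)[OF sep near[OF that]] by (simp add: t_def)
  next
    fix w0 w1 w2 w3
    assume W: "{w0, w1, w2, w3} \<subseteq> insert x Y" "distinct [w0, w1, w2, w3]"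
    show "gram_det_of_dists (t w0 w1) (t w0 w2) (t w0 w3) (t w1 w2) (t w1 w3) (t w2 w3) = 0"
    proof (rule ccontr)
      assume "gram_det_of_dists (t w0 w1) (t w0 w2) (t w0 w3) (t w1 w2) (t w1 w3) (t w2 w3) \<noteq> 0"
      then have "gram_det_of_dists (dist w0 w1) (dist w0 w2) (dist w0 w3) (dist w1 w2) (dist w1 w3)
          (dist w2 w3) \<noteq> 0"
        by (rule stable[OF t_in t_in t_in t_in t_in t_in]) (use W in \<open>auto intro: t_near\<close>)
      then show False
        using gram_det_of_dists_planar by simp
    qed
  qed (use assms in auto)
qed

lemma no_near_planar_star:
  assumes "a > 0" "b > 0" "c > 0"
  obtains \<eta> where "\<eta> > 0"
    "\<And>x (Y :: (real^2) set). card Y = 4 \<Longrightarrow> x \<notin> Y \<Longrightarrow>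
       (\<And>u v. u \<in> Y \<Longrightarrow> v \<in> Y \<Longrightarrow> u \<noteq> v \<Longrightarrow> near_perm3 a b c \<eta> (dist x u) (dist x v) (dist u v)) \<Longrightarrow>
       False"
proof -
  have "\<forall>\<^sub>F \<eta> in at_right 0. 0 < \<eta> \<and> separated \<eta> {a, b, c} \<and> gram_det_stable \<eta> {a, b, c}"
    by (intro eventually_conj eventually_at_right_less eventually_separated eventually_gram_det_stable)
      simp_all
  then obtain \<eta> where "\<eta> > 0" "separated \<eta> {a, b, c}" "gram_det_stable \<eta> {a, b, c}"
    using eventually_happens'[OF trivial_limit_at_right_real] by blast
  then show thesis
    using that no_near_planar_star_at[OF assms] by blast
qed

theorem lemma2p7:
  fixes a b c :: real
  assumes "is_triangle a b c"
  shows "forbidden_for J4 a b c"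
proof -
  have "a > 0" "b > 0" "c > 0"
    using assms unfolding is_triangle_def by auto
  then obtain \<eta> where "\<eta> > 0" and no_star: "\<And>x (Y :: (real^2) set). card Y = 4 \<Longrightarrow> x \<notin> Y \<Longrightarrow>
       (\<And>u v. u \<in> Y \<Longrightarrow> v \<in> Y \<Longrightarrow> u \<noteq> v \<Longrightarrow> near_perm3 a b c \<eta> (dist x u) (dist x v) (dist u v)) \<Longrightarrow>
       False"
    using no_near_planar_star by metis
  define m where "m = min a (min b c)"
  have "m > 0"
    using \<open>a > 0\<close> \<open>b > 0\<close> \<open>c > 0\<close> by (simp add: m_def)
  then have scale: "2 * (\<eta> / (2 * m) * m) = \<eta>"
    by simp
  show ?thesis
    unfolding forbidden_for_def free_of_def
  proof (intro exI[of _ "\<eta> / (2 * m)"] conjI allI impI notI)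
    show "\<eta> / (2 * m) > 0"
      using \<open>\<eta> > 0\<close> \<open>m > 0\<close> by simp
    fix P :: "(real^2) set"
    assume "contains_copy J4 (congr_graph a b c P (\<eta> / (2 * m)))"
    then obtain x Y where "card Y = 4" "x \<notin> Y" and edge: "\<And>u v. u \<in> Y \<Longrightarrow> v \<in> Y \<Longrightarrow> u \<noteq> v \<Longrightarrow>
        {x, u, v} \<in> snd (congr_graph a b c P (\<eta> / (2 * m))) \<and> distinct [x, u, v]"
      using contains_copy_J4D by metis
    have "near_perm3 a b c \<eta> (dist x u) (dist x v) (dist u v)" if "u \<in> Y" "v \<in> Y" "u \<noteq> v" for u v
      using congr_graph_edge_near_perm3[OF edge[OF that, THEN conjunct1] edge[OF that, THEN conjunct2]]
      unfolding m_def[symmetric] scale .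
    then show False
      using no_star \<open>card Y = 4\<close> \<open>x \<notin> Y\<close> by blast
  qed
qed

end
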